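(* With $\mu_n=\{p/n:p\in\mathbb Z,\ |p/n|\le n\}$, $\Lambda_{\mathbb Q}=\{\mu_{m!}:m\in\mathbb N\}$, $I$ a fine ideal of $\mathfrak F(\mathcal P_{fin}(\mathbb Q),\mathbb R)$ containing $I_{0,\Lambda_{\mathbb Q}}$, and $J$ the canonical projection, put $\alpha=\mathfrak n(\mathbb N)=J(\lambda\mapsto|\lambda\cap\mathbb N|)$. Then $\mathfrak n(\mathbb Q^+)=\alpha^2$ and $\mathfrak n(\mathbb Q)=2\alpha^2+1$, and hence in the NAP-space produced by $(\mathbb Q,1,I)$, $P(\mathbb N)=\dfrac{\alpha}{2\alpha^2+1}$.
   Context: $\mathbb N=\{1,2,3,\dots\}$, $\mathbb Q^+=\{x\in\mathbb Q:x>0\}$. $\mathcal P_{fin}(\Omega)$ is the set of finite subsets of $\Omega$ and $\mathfrak F=\mathfrak F(\mathcal P_{fin}(\Omega),\mathbb R)$ the real algebra of functions $\mathcal P_{fin}(\Omega)\to\mathbb R$ with pointwise operations. For $\omega\in\Omega$, $\chi_\lambda(\omega)=1$ if $\omega\in\lambda$, else $0$. An ideal $I$ of $\mathfrak F$ is fine if it is maximal and $\lambda\mapsto 1-\chi_\lambda(\omega)$ lies in $I$ for every $\omega\in\Omega$. For $\Lambda\subseteq\mathcal P_{fin}(\Omega)$, $I_{0,\Lambda}=\{\varphi\in\mathfrak F:\varphi(\lambda)=0\text{ for all }\lambda\in\Lambda\}$. The NAP-space produced by $(\Omega,1,I)$ has $P(A)=J(\lambda\mapsto|A\cap\lambda|)/J(\lambda\mapsto|\lambda|)$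 with $J$ the canonical projection $\mathfrak F\to\mathfrak F/I$; the numerosity of $A\subseteq\Omega$ is $\mathfrak n(A)=J(\lambda\mapsto|A\cap\lambda|)$ (equivalently $P(A)/P(\{\omega\})$). *)

theory Defs
  imports "HOL-Algebra.Algebra" "HOL-Library.FSet" "HOL-Library.Function_Algebras"
begin

text \<open>The real algebra F(P_fin(Omega), R) of real functions on finite subsets of Omega,
  with pointwise operations, as a HOL-Algebra ring record.\<close>
definition FR :: "('a fset \<Rightarrow> real) ring" where
  "FR = \<lparr>carrier = UNIV, monoid.mult = (*), one = 1, ring.zero = 0, ring.add = (+)\<rparr>"

definition chi :: "'a fset \<Rightarrow> 'a \<Rightarrow> real" where
  "chi l w = (if w |\<in>| l then 1 else 0)"

definition fine_ideal :: "('a fset \<Rightarrow> real) set \<Rightarrow> bool" where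
  "fine_ideal I \<longleftrightarrow> maximalideal I FR \<and> (\<forall>w. (\<lambda>l. 1 - chi l w) \<in> I)"

definition I0 :: "'a fset set \<Rightarrow> ('a fset \<Rightarrow> real) set" where
  "I0 Lam = {phi. \<forall>l\<in>Lam. phi l = 0}"

definition Jproj :: "('a fset \<Rightarrow> real) set \<Rightarrow> ('a fset \<Rightarrow> real) \<Rightarrow> ('a fset \<Rightarrow> real) set" where
  "Jproj I f = I +>\<^bsub>FR\<^esub> f"

definition numerosity :: "('a fset \<Rightarrow> real) set \<Rightarrow> 'a set \<Rightarrow> ('a fset \<Rightarrow> real) set" where
  "numerosity I A = Jproj I (\<lambda>l. real (card (A \<inter> fset l)))"

text \<open>NAP-space probability produced by (Omega, 1, I) (Omega = UNIV of the type).\<close>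
definition nap_P :: "('a fset \<Rightarrow> real) set \<Rightarrow> 'a set \<Rightarrow> ('a fset \<Rightarrow> real) set" where
  "nap_P I A = Jproj I (\<lambda>l. real (card (A \<inter> fset l)))
       \<otimes>\<^bsub>FR Quot I\<^esub> inv\<^bsub>FR Quot I\<^esub> (Jproj I (\<lambda>l. real (fcard l)))"

definition mu :: "nat \<Rightarrow> rat fset" where
  "mu n = Abs_fset {q. \<exists>p::int. q = of_int p / of_nat n \<and> \<bar>of_int p / of_nat n\<bar> \<le> (of_nat n :: rat)}"

definition Lambda_Q :: "rat fset set" where
  "Lambda_Q = {mu (fact m) | m. m \<ge> 1}"

definition natsQ :: "rat set" where
  "natsQ = {of_nat n | n. n \<ge> 1}"

end

theory Submission
  imports Defs
begin

(* Every window  lambda = mu(m!)  of Lambda_Q is the finite grid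
     grid N = { p/N : p integer, |p/N| <= N }  with  N = m! >= 1,
   i.e. the image of the integer interval [-N^2, N^2] under p |-> p/N.  Counting
   on this grid gives, for every N >= 1,
     |grid N| = 2 N^2 + 1,   |Q^+ \<inter> grid N| = N^2,   |natsQ \<inter> grid N| = N.
   So on Lambda_Q the counting functions of Q^+ and Q coincide pointwise with
   a*a and a*a + a*a + 1, where a counts the positive integers.  The canonical
   projection J onto FR Quot I is a ring homomorphism for any ideal I of FR,
   and it identifies functions agreeing on Lambda_Q as soon as I contains
   I0 Lambda_Q.  Hence n(Q^+) = alpha^2 and n(Q) = 2 alpha^2 + 1 with
   alpha = n(natsQ), and P(natsQ) = alpha / n(Q) by unfolding. *)

definition grid :: "nat \<Rightarrow> rat set" where
  "grid N = {q. \<exists>p::int. q = of_int p / of_nat N \<and> \<bar>of_int p / of_nat N\<bar> \<le> (of_nat N :: rat)}"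

text \<open>For N \<ge> 1 the scaling p \<mapsto> p/N is injective, so it preserves cardinalities.\<close>
lemma card_scaled_image:
  assumes "N \<ge> 1"
  shows "card ((\<lambda>p::int. of_int p / of_nat N :: rat) ` A) = card A"
  using assms by (intro card_image) (auto simp: inj_on_def)

lemma grid_eq_image:
  assumes "N \<ge> 1"
  shows "grid N = (\<lambda>p. of_int p / of_nat N) ` {- ((int N)^2) .. (int N)^2}"
proof -
  have N: "(of_nat N :: rat) > 0" using assms by simp
  have bound: "\<bar>of_int p / of_nat N\<bar> \<le> (of_nat N :: rat) \<longleftrightarrow> p \<in> {- ((int N)^2) .. (int N)^2}"
    for p :: int
  proof -
    have "\<bar>of_int p / of_nat N\<bar> \<le> (of_nat N :: rat) \<longleftrightarrow> of_int \<bar>p\<bar> \<le> (of_int ((int N)^2) :: rat)"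
      using N by (simp add: pos_divide_le_eq power2_eq_square)
    also have "\<dots> \<longleftrightarrow> p \<in> {- ((int N)^2) .. (int N)^2}"
      by (simp only: of_int_le_iff atLeastAtMost_iff abs_le_iff) linarith
    finally show ?thesis .
  qed
  show ?thesis unfolding grid_def using bound by blast
qed

text \<open>Each grid is finite, so mu N really has the grid as its underlying set.\<close>
lemma finite_grid: "N \<ge> 1 \<Longrightarrow> finite (grid N)"
  by (simp add: grid_eq_image)

lemma card_grid:
  assumes "N \<ge> 1"
  shows "card (grid N) = 2 * N^2 + 1"
  using assms by (simp add: grid_eq_image card_scaled_image nat_add_distrib nat_mult_distrib nat_power_eq)

lemma card_positive_grid:
  assumes "N \<ge> 1"
  shows "card ({q. q > 0} \<inter> grid N) = N^2"
proof -
  have "(of_nat N :: rat) > 0" using assms by simp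
  then have "{q. q > 0} \<inter> grid N = (\<lambda>p. of_int p / of_nat N) ` {1 .. (int N)^2}"
    unfolding grid_eq_image[OF assms] by (auto simp: zero_less_divide_iff)
  then show ?thesis using assms by (simp add: card_scaled_image nat_power_eq)
qed

lemma natsQ_inter_grid:
  assumes "N \<ge> 1"
  shows "natsQ \<inter> grid N = of_nat ` {1..N}"
proof (intro equalityI subsetI)
  fix q assume q: "q \<in> natsQ \<inter> grid N"
  then obtain n where n: "q = of_nat n" "n \<ge> 1" unfolding natsQ_def by blast
  from q obtain p where "q = of_int p / of_nat N" "\<bar>of_int p / of_nat N\<bar> \<le> (of_nat N :: rat)"
    unfolding grid_def by blast
  then have "(of_nat n :: rat) \<le> of_nat N" using n(1) by (metis abs_ge_self order_trans)
  then have "n \<le> N" by simp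
  then show "q \<in> of_nat ` {1..N}" using n by auto
next
  fix q assume "q \<in> (of_nat ` {1..N} :: rat set)"
  then obtain n where n: "q = of_nat n" "1 \<le> n" "n \<le> N" by auto
  have "q = of_int (int n * int N) / of_nat N" "\<bar>of_int (int n * int N) / of_nat N\<bar> \<le> (of_nat N :: rat)"
    using assms n by simp_all
  then show "q \<in> natsQ \<inter> grid N" unfolding natsQ_def grid_def using n by blast
qed

lemma card_natsQ_grid:
  assumes "N \<ge> 1"
  shows "card (natsQ \<inter> grid N) = N"
  using assms by (simp add: natsQ_inter_grid card_image inj_on_def)

lemma Lambda_Q_grid:
  assumes "l \<in> Lambda_Q"
  obtains N where "N \<ge> 1" "fset l = grid N"
proof -
  from assms obtain m where l: "l = mu (fact m)" unfolding Lambda_Q_def by blast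
  have N: "(fact m :: nat) \<ge> 1" by (simp add: Suc_leI)
  have "fset l = grid (fact m)"
    using finite_grid[OF N] unfolding l mu_def grid_def[symmetric] by (simp add: Abs_fset_inverse)
  with N that show thesis by blast
qed

lemma cring_FR: "cring (FR :: ('a fset \<Rightarrow> real) ring)"
proof -
  have "\<exists>y. x + y = 0" for x :: "'a fset \<Rightarrow> real"
    using add.right_inverse by blast
  then show ?thesis
    unfolding FR_def by unfold_locales (auto simp: algebra_simps Units_def)
qed

lemma Jproj_ring_hom:
  assumes "ideal I FR"
  shows "Jproj I \<in> ring_hom FR (FR Quot I)"
  using ideal.rcos_ring_hom[OF assms] unfolding Jproj_def[abs_def] .

lemma Jproj_mult: "ideal I FR \<Longrightarrow> Jproj I (f * g) = Jproj I f \<otimes>\<^bsub>FR Quot I\<^esub> Jproj I g"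
  using ring_hom_mult[OF Jproj_ring_hom, of I f g] by (simp add: FR_def)

lemma Jproj_add: "ideal I FR \<Longrightarrow> Jproj I (f + g) = Jproj I f \<oplus>\<^bsub>FR Quot I\<^esub> Jproj I g"
  using ring_hom_add[OF Jproj_ring_hom, of I f g] by (simp add: FR_def)

lemma Jproj_one: "ideal I FR \<Longrightarrow> Jproj I 1 = \<one>\<^bsub>FR Quot I\<^esub>"
  using ring_hom_one[OF Jproj_ring_hom, of I] by (simp add: FR_def)

lemma Jproj_eq_on:
  assumes I: "ideal I FR" and I0: "I0 Lam \<subseteq> I"
    and agree: "\<And>l. l \<in> Lam \<Longrightarrow> f l = g l"
  shows "Jproj I f = Jproj I g"
proof -
  interpret Q: ring "FR Quot I" using ideal.quotient_is_ring[OF I] .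
  have "f - g \<in> I" using agree I0 unfolding I0_def by auto
  then have zero: "Jproj I (f - g) = \<zero>\<^bsub>FR Quot I\<^esub>"
    using ring.a_rcos_zero[OF cring.axioms(1)[OF cring_FR] I]
    unfolding Jproj_def by (simp add: FactRing_def)
  have "Jproj I g \<in> carrier (FR Quot I)"
    using ring_hom_closed[OF Jproj_ring_hom[OF I]] by (simp add: FR_def)
  moreover have "Jproj I f = Jproj I g \<oplus>\<^bsub>FR Quot I\<^esub> Jproj I (f - g)"
    using Jproj_add[OF I, of g "f - g"] by simp
  ultimately show ?thesis using zero by simp
qed

theorem mainTheorem16:
  fixes I :: "(rat fset \<Rightarrow> real) set"
  assumes "fine_ideal I"
    and "I0 Lambda_Q \<subseteq> I"
  shows "numerosity I {q. q > 0} = numerosity I natsQ \<otimes>\<^bsub>FR Quot I\<^esub> numerosity I natsQ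
    \<and> numerosity I UNIV = (numerosity I natsQ \<otimes>\<^bsub>FR Quot I\<^esub> numerosity I natsQ)
          \<oplus>\<^bsub>FR Quot I\<^esub> (numerosity I natsQ \<otimes>\<^bsub>FR Quot I\<^esub> numerosity I natsQ)
          \<oplus>\<^bsub>FR Quot I\<^esub> \<one>\<^bsub>FR Quot I\<^esub>
    \<and> nap_P I natsQ = numerosity I natsQ \<otimes>\<^bsub>FR Quot I\<^esub>
          inv\<^bsub>FR Quot I\<^esub> ((numerosity I natsQ \<otimes>\<^bsub>FR Quot I\<^esub> numerosity I natsQ)
          \<oplus>\<^bsub>FR Quot I\<^esub> (numerosity I natsQ \<otimes>\<^bsub>FR Quot I\<^esub> numerosity I natsQ)
          \<oplus>\<^bsub>FR Quot I\<^esub> \<one>\<^bsub>FR Quot I\<^esub>)"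
proof -
  have I: "ideal I FR"
    using assms(1) unfolding fine_ideal_def by (blast intro: maximalideal.axioms(1))
  define a where "a = (\<lambda>l::rat fset. real (card (natsQ \<inter> fset l)))"
  have alpha: "numerosity I natsQ = Jproj I a" unfolding numerosity_def a_def ..
  have positive: "numerosity I {q. q > 0} = Jproj I (a * a)"
    unfolding numerosity_def
    by (rule Jproj_eq_on[OF I assms(2)], erule Lambda_Q_grid)
       (simp add: a_def card_positive_grid card_natsQ_grid power2_eq_square)
  have total: "numerosity I UNIV = Jproj I (a * a + a * a + 1)"
    unfolding numerosity_def
    by (rule Jproj_eq_on[OF I assms(2)], erule Lambda_Q_grid)
       (simp add: a_def card_grid card_natsQ_grid power2_eq_square)
  have prob: "nap_P I natsQ = numerosity I natsQ \<otimes>\<^bsub>FR Quot I\<^esub> inv\<^bsub>FR Quot I\<^esub> (numerosity I UNIV)"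
    unfolding nap_P_def numerosity_def by (simp add: fcard.rep_eq)
  show ?thesis
    using positive total prob
    unfolding alpha Jproj_mult[OF I] Jproj_add[OF I] Jproj_one[OF I] by simp
qed

end
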